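(* Let $(E,\mathcal{I})$ be the partition matroid given by a partition $E_1,\dots,E_b$ of $E$ and integers $k_z$ with $2\le k_z\le|E_z|$, and let $\gamma=\min_{z\in[b]}\lfloor k_z/2\rfloor/k_z$. Suppose $f:2^E\times O^E\to\mathbb{R}_{\ge0}$ is worst-case monotone, worst-case submodular and adaptive submodular with respect to $p(\phi)$, and satisfies minimal dependency. Then the adaptive hybrid policy $\pi^m=\pi^{mw}@\pi^{ma}$ has robustness ratio $\alpha(\pi^m)\ge\frac{\gamma}{\gamma+1}$ (i.e. $f_{wc}(\pi^m)\ge\frac{\gamma}{\gamma+1}f_{wc}(\pi^*_{wc})$ and $f_{avg}(\pi^m)\ge\frac{\gamma}{\gamma+1}f_{avg}(\pi^*_{avg})$).
   Context: Setting. $E$ is a finite set of $n$ items and $O$ a finite set of states. A realization is a function $\phi:E\to O$; $p$ is a probability distribution (prior) on the set of all realizations, $\Phi$ denotes a random realization with law $p$, and $U^+=\{\phi: p(\phi)>0\}$. A partial realization is a function $\psi:S\to O$ with $S\subseteq E$, $\mathrm{dom}(\psi)=S$; it is identified with the set of pairs $\{(e,\psi(e)):e\in S\}$, so $\psi\subseteq\psi'$ means $\mathrm{dom}(\psi)\subseteq\mathrm{dom}(\psi')$ and they agree on $\mathrm{dom}(\psi)$. A realization $\phi$ is consistent with $\psi$, written $\phi\sim\psi$, if it agrees with $\psi$ on $\mathrm{dom}(\psi)$. Only partial realizations with $\Pr[\Phi\sim\psi]>0$ are considered, and $p(\phi\mid\psi)=\Pr[\Phi=\phi\mid\Phi\sim\psi]$.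 For $S\subseteq E$ and a partial realization $\psi$, $f(S,\psi)=\mathbb{E}[f(S,\Phi)\mid\Phi\sim\psi]$. For $e\notin\mathrm{dom}(\psi)$, let $O(e,\psi)=\{o\in O:\exists\phi\text{ with }p(\phi\mid\psi)>0,\ \phi(e)=o\}$ and define the worst-case marginal utility $f_{wc}(e\mid\psi)=\min_{o\in O(e,\psi)}\{f(\mathrm{dom}(\psi)\cup\{e\},\psi\cup\{(e,o)\})-f(\mathrm{dom}(\psi),\psi)\}$ and the expected marginal utility $f_{avg}(e\mid\psi)=\mathbb{E}[f(\mathrm{dom}(\psi)\cup\{e\},\Phi)-f(\mathrm{dom}(\psi),\Phi)\mid\Phi\sim\psi]$. $f$ is worst-case submodular if $f_{wc}(e\mid\psi)\ge f_{wc}(e\mid\psi')$ for all partial realizations $\psi\subseteq\psi'$ and all $e\in E\setminus\mathrm{dom}(\psi')$; it is worst-case monotone if $f_{wc}(e\mid\psi)\ge0$ for all $\psi$ and $e\notin\mathrm{dom}(\psi)$. $f$ is adaptive submodular if $f_{avg}(e\mid\psi)\ge f_{avg}(e\mid\psi')$ for all $\psi\subseteq\psi'$ and $e\in E\setminus\mathrm{dom}(\psi')$, and adaptive monotone if $f_{avg}(e\mid\psi)\ge0$ always. $f$ satisfies minimal dependency if $f(\mathrm{dom}(\psi),\psi)=f(\mathrm{dom}(\psi),\phi)$ for every partial realization $\psi$ and every $\phi\in U^+$ with $\phi\sim\psi$. Policies. A (deterministic) policy $\pi$ is a rule which, given the current observation (the partial realization of the items selected so far), either selects a new item or stops; after an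 item $e$ is selected under realization $\phi$, the state $\phi(e)$ is observed. $E(\pi,\phi)$ is the set of items selected by $\pi$ under $\phi$. $f_{avg}(\pi)=\mathbb{E}[f(E(\pi,\Phi),\Phi)]$ and $f_{wc}(\pi)=\min_{\phi\in U^+}f(E(\pi,\phi),\phi)$. The concatenation $\pi@\pi'$ runs $\pi$ and then runs $\pi'$ from scratch, ignoring the observations obtained by $\pi$; its selected set is the union of the two. $\pi^*_{wc}$ (resp. $\pi^*_{avg}$) maximizes $f_{wc}(\pi)$ (resp. $f_{avg}(\pi)$) over policies with $E(\pi,\phi)\in\mathcal{I}$ for all $\phi\in U^+$; the robustness ratio is $\alpha(\pi)=\min\{f_{wc}(\pi)/f_{wc}(\pi^*_{wc}),\ f_{avg}(\pi)/f_{avg}(\pi^*_{avg})\}$. Partition matroid: $\mathcal{I}=\{I\subseteq E:|I\cap E_z|\le k_z\ \forall z\in[b]\}$. Policy $\pi^{mw}$: starting from the empty observation $\psi=\emptyset$, for $z=1,\dots,b$ in turn, perform $\lfloor k_z/2\rfloor$ iterations, each selecting $e\in\arg\max_{e\in E_z\setminus\mathrm{dom}(\psi)}f_{wc}(e\mid\psi)$ for the current observation $\psi$, observing $\Phi(e)$ and adding $(e,\Phi(e))$ to $\psi$. Policy $\pi^{ma}$: identical except that each meta-round $z$ performs $\lceil k_z/2\rceil$ iterations and uses $f_{avg}(e\mid\psi)$ in place of $f_{wc}(e\mid\psi)$. Ties are broken arbitrarily. $\pi^m=\pi^{mw}@\pi^{ma}$. *)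

theory Defs
  imports Complex_Main
begin

(* Items: the finite type 'e (E = UNIV); states: the finite type 'o (O = UNIV).
   Realizations: 'e \<Rightarrow> 'o.  Partial realizations: maps 'e \<rightharpoonup> 'o. *)

definition is_prior :: "(('e::finite \<Rightarrow> 'o::finite) \<Rightarrow> real) \<Rightarrow> bool" where
  "is_prior p \<longleftrightarrow> (\<forall>\<phi>. 0 \<le> p \<phi>) \<and> (\<Sum>\<phi>\<in>UNIV. p \<phi>) = 1"

definition consistent :: "('e \<Rightarrow> 'o) \<Rightarrow> ('e \<rightharpoonup> 'o) \<Rightarrow> bool" where
  "consistent \<phi> \<psi> \<longleftrightarrow> (\<forall>e\<in>dom \<psi>. \<psi> e = Some (\<phi> e))"

definition prob_cons :: "(('e::finite \<Rightarrow> 'o::finite) \<Rightarrow> real) \<Rightarrow> ('e \<rightharpoonup> 'o) \<Rightarrow> real" where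
  "prob_cons p \<psi> = (\<Sum>\<phi>\<in>{\<phi>. consistent \<phi> \<psi>}. p \<phi>)"

definition valid_pr :: "(('e::finite \<Rightarrow> 'o::finite) \<Rightarrow> real) \<Rightarrow> ('e \<rightharpoonup> 'o) \<Rightarrow> bool" where
  "valid_pr p \<psi> \<longleftrightarrow> prob_cons p \<psi> > 0"

definition cond_f :: "(('e::finite \<Rightarrow> 'o::finite) \<Rightarrow> real) \<Rightarrow> ('e set \<Rightarrow> ('e \<Rightarrow> 'o) \<Rightarrow> real)
    \<Rightarrow> 'e set \<Rightarrow> ('e \<rightharpoonup> 'o) \<Rightarrow> real" where
  "cond_f p f S \<psi> = (\<Sum>\<phi>\<in>{\<phi>. consistent \<phi> \<psi>}. p \<phi> * f S \<phi>) / prob_cons p \<psi>"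

definition states_at :: "(('e::finite \<Rightarrow> 'o::finite) \<Rightarrow> real) \<Rightarrow> 'e \<Rightarrow> ('e \<rightharpoonup> 'o) \<Rightarrow> 'o set" where
  "states_at p e \<psi> = {s. \<exists>\<phi>. p \<phi> / prob_cons p \<psi> > 0 \<and> consistent \<phi> \<psi> \<and> \<phi> e = s}"

definition fwc_marg :: "(('e::finite \<Rightarrow> 'o::finite) \<Rightarrow> real) \<Rightarrow> ('e set \<Rightarrow> ('e \<Rightarrow> 'o) \<Rightarrow> real)
    \<Rightarrow> 'e \<Rightarrow> ('e \<rightharpoonup> 'o) \<Rightarrow> real" where
  "fwc_marg p f e \<psi> = Min ((\<lambda>s. cond_f p f (dom \<psi> \<union> {e}) (\<psi>(e \<mapsto> s)) - cond_f p f (dom \<psi>) \<psi>)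
                           ` states_at p e \<psi>)"

definition favg_marg :: "(('e::finite \<Rightarrow> 'o::finite) \<Rightarrow> real) \<Rightarrow> ('e set \<Rightarrow> ('e \<Rightarrow> 'o) \<Rightarrow> real)
    \<Rightarrow> 'e \<Rightarrow> ('e \<rightharpoonup> 'o) \<Rightarrow> real" where
  "favg_marg p f e \<psi> =
     (\<Sum>\<phi>\<in>{\<phi>. consistent \<phi> \<psi>}. p \<phi> * (f (dom \<psi> \<union> {e}) \<phi> - f (dom \<psi>) \<phi>)) / prob_cons p \<psi>"

definition wc_submodular where
  "wc_submodular p f \<longleftrightarrow> (\<forall>\<psi> \<psi>' e. valid_pr p \<psi> \<and> valid_pr p \<psi>' \<and> \<psi> \<subseteq>\<^sub>m \<psi>' \<and> e \<notin> dom \<psi>'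
      \<longrightarrow> fwc_marg p f e \<psi> \<ge> fwc_marg p f e \<psi>')"

definition wc_monotone where
  "wc_monotone p f \<longleftrightarrow> (\<forall>\<psi> e. valid_pr p \<psi> \<and> e \<notin> dom \<psi> \<longrightarrow> fwc_marg p f e \<psi> \<ge> 0)"

definition adaptive_submodular where
  "adaptive_submodular p f \<longleftrightarrow> (\<forall>\<psi> \<psi>' e. valid_pr p \<psi> \<and> valid_pr p \<psi>' \<and> \<psi> \<subseteq>\<^sub>m \<psi>' \<and> e \<notin> dom \<psi>'
      \<longrightarrow> favg_marg p f e \<psi> \<ge> favg_marg p f e \<psi>')"

definition minimal_dependency where
  "minimal_dependency p f \<longleftrightarrow> (\<forall>\<psi> \<phi>. valid_pr p \<psi> \<and> p \<phi> > 0 \<and> consistent \<phi> \<psi>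
      \<longrightarrow> cond_f p f (dom \<psi>) \<psi> = f (dom \<psi>) \<phi>)"

(* Deterministic policies: given the current observation, select an item (Some e) or stop (None).
   Selecting an already-observed item is treated as stopping. *)
type_synonym ('e, 'o) policy = "('e \<rightharpoonup> 'o) \<Rightarrow> 'e option"

definition policy_step :: "('e, 'o) policy \<Rightarrow> ('e \<Rightarrow> 'o) \<Rightarrow> ('e \<rightharpoonup> 'o) \<Rightarrow> ('e \<rightharpoonup> 'o)" where
  "policy_step \<pi> \<phi> \<psi> = (case \<pi> \<psi> of None \<Rightarrow> \<psi>
                         | Some e \<Rightarrow> if e \<in> dom \<psi> then \<psi> else \<psi>(e \<mapsto> \<phi> e))"

(* final observation: at most |E| selections can happen *)
definition final_obs :: "('e::finite, 'o) policy \<Rightarrow> ('e \<Rightarrow> 'o) \<Rightarrow> ('e \<rightharpoonup> 'o)" where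
  "final_obs \<pi> \<phi> = (policy_step \<pi> \<phi> ^^ card (UNIV :: 'e set)) Map.empty"

definition sel :: "('e::finite, 'o) policy \<Rightarrow> ('e \<Rightarrow> 'o) \<Rightarrow> 'e set" where
  "sel \<pi> \<phi> = dom (final_obs \<pi> \<phi>)"

(* E(\<pi> @ \<pi>', \<phi>) = E(\<pi>,\<phi>) \<union> E(\<pi>',\<phi>) *)
definition sel_concat :: "('e::finite, 'o) policy \<Rightarrow> ('e, 'o) policy \<Rightarrow> ('e \<Rightarrow> 'o) \<Rightarrow> 'e set" where
  "sel_concat \<pi> \<pi>' \<phi> = sel \<pi> \<phi> \<union> sel \<pi>' \<phi>"

definition favg_pol :: "(('e::finite \<Rightarrow> 'o::finite) \<Rightarrow> real) \<Rightarrow> ('e set \<Rightarrow> ('e \<Rightarrow> 'o) \<Rightarrow> real)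
    \<Rightarrow> (('e \<Rightarrow> 'o) \<Rightarrow> 'e set) \<Rightarrow> real" where
  "favg_pol p f Sel = (\<Sum>\<phi>\<in>UNIV. p \<phi> * f (Sel \<phi>) \<phi>)"

definition fwc_pol :: "(('e::finite \<Rightarrow> 'o::finite) \<Rightarrow> real) \<Rightarrow> ('e set \<Rightarrow> ('e \<Rightarrow> 'o) \<Rightarrow> real)
    \<Rightarrow> (('e \<Rightarrow> 'o) \<Rightarrow> 'e set) \<Rightarrow> real" where
  "fwc_pol p f Sel = Min ((\<lambda>\<phi>. f (Sel \<phi>) \<phi>) ` {\<phi>. p \<phi> > 0})"

definition pm_indep :: "nat \<Rightarrow> (nat \<Rightarrow> 'e set) \<Rightarrow> (nat \<Rightarrow> nat) \<Rightarrow> 'e set \<Rightarrow> bool" where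
  "pm_indep b Ez k I \<longleftrightarrow> (\<forall>z\<in>{1..b}. card (I \<inter> Ez z) \<le> k z)"

definition feasible_policy where
  "feasible_policy p b Ez k \<pi> \<longleftrightarrow> (\<forall>\<phi>. p \<phi> > 0 \<longrightarrow> pm_indep b Ez k (sel \<pi> \<phi>))"

(* On an observation \<psi>, the current meta-round is the least z \<in> [b] whose quota
   is not yet filled (items of E_z can only have been chosen in round z); if none, stop.
   Ties broken arbitrarily (any choice of argmax, possibly depending on \<psi>). *)
definition meta_greedy :: "(('e::finite \<Rightarrow> 'o::finite) \<Rightarrow> real) \<Rightarrow> ('e \<Rightarrow> ('e \<rightharpoonup> 'o) \<Rightarrow> real)
    \<Rightarrow> nat \<Rightarrow> (nat \<Rightarrow> 'e set) \<Rightarrow> (nat \<Rightarrow> nat) \<Rightarrow> ('e, 'o) policy \<Rightarrow> bool" where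
  "meta_greedy p score b Ez q \<pi> \<longleftrightarrow>
    (\<forall>\<psi>. valid_pr p \<psi> \<longrightarrow>
      (if \<exists>z\<in>{1..b}. card (dom \<psi> \<inter> Ez z) < q z then
         (let z = (LEAST z. z \<in> {1..b} \<and> card (dom \<psi> \<inter> Ez z) < q z) in
           \<exists>e. \<pi> \<psi> = Some e \<and> e \<in> Ez z - dom \<psi> \<and>
               (\<forall>e'\<in>Ez z - dom \<psi>. score e' \<psi> \<le> score e \<psi>))
       else \<pi> \<psi> = None))"

definition is_pi_mw where
  "is_pi_mw p f b Ez k \<pi> \<longleftrightarrow> meta_greedy p (fwc_marg p f) b Ez (\<lambda>z. k z div 2) \<pi>"

definition is_pi_ma where
  "is_pi_ma p f b Ez k \<pi> \<longleftrightarrow> meta_greedy p (favg_marg p f) b Ez (\<lambda>z. (k z + 1) div 2) \<pi>"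

end

theory Submission
  imports Defs
begin

text \<open>
  Consider one meta-round \<open>z\<close> of a greedy policy and let \<open>c\<^sub>z\<close> be the average score of its
  \<open>q\<^sub>z\<close> selections. An item of \<open>E\<^sub>z\<close> left out by the greedy run scored at most the greedy choice
  in every step of round \<open>z\<close>, hence at most \<open>c\<^sub>z\<close>, and by (worst-case or adaptive) submodularity
  its marginal utility stays below \<open>c\<^sub>z\<close> after any extension of the greedy history. A feasible
  policy run on top of the greedy one therefore gains at most
  \<open>\<Sum>\<^sub>z k\<^sub>z c\<^sub>z \<le> \<gamma>\<^sup>-\<^sup>1 \<Sum>\<^sub>z q\<^sub>z c\<^sub>z\<close>, and the total greedy score is at most the greedy value.
  So the optimum is at most \<open>1 + \<gamma>\<^sup>-\<^sup>1\<close> times the value of \<open>\<pi>\<^sup>m\<^sup>w\<close> in the worst case and of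
  \<open>\<pi>\<^sup>m\<^sup>a\<close> on average, and by monotonicity \<open>\<pi>\<^sup>m\<close> is at least as good as either. In the worst case
  the feasible policy is played against an adversary answering each query with a state of least
  marginal utility; on average the bound holds in expectation by the law of total expectation.
\<close>

section \<open>Runs of a policy\<close>

definition oracle_step :: "('e, 'o) policy \<Rightarrow> ('e \<Rightarrow> ('e \<rightharpoonup> 'o) \<Rightarrow> 'o) \<Rightarrow> ('e \<rightharpoonup> 'o) \<Rightarrow> ('e \<rightharpoonup> 'o)" where
  "oracle_step \<pi> ans \<psi> = (case \<pi> \<psi> of None \<Rightarrow> \<psi> | Some e \<Rightarrow> if e \<in> dom \<psi> then \<psi> else \<psi>(e \<mapsto> ans e \<psi>))"

definition oracle_run :: "('e, 'o) policy \<Rightarrow> ('e \<Rightarrow> ('e \<rightharpoonup> 'o) \<Rightarrow> 'o) \<Rightarrow> nat \<Rightarrow> ('e \<rightharpoonup> 'o)" where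
  "oracle_run \<pi> ans n = (oracle_step \<pi> ans ^^ n) Map.empty"

abbreviation run :: "('e, 'o) policy \<Rightarrow> ('e \<Rightarrow> 'o) \<Rightarrow> nat \<Rightarrow> ('e \<rightharpoonup> 'o)" where
  "run \<pi> \<phi> \<equiv> oracle_run \<pi> (\<lambda>e _. \<phi> e)"

lemma oracle_run_0 [simp]: "oracle_run \<pi> ans 0 = Map.empty"
  by (simp add: oracle_run_def)

lemma oracle_run_Suc: "oracle_run \<pi> ans (Suc n) = oracle_step \<pi> ans (oracle_run \<pi> ans n)"
  by (simp add: oracle_run_def)

lemma dom_oracle_step:
  "dom (oracle_step \<pi> ans \<psi>) = (case \<pi> \<psi> of None \<Rightarrow> dom \<psi> | Some e \<Rightarrow> insert e (dom \<psi>))"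
  by (auto simp: oracle_step_def split: option.splits)

lemma dom_run_Suc:
  "dom (run \<pi> \<phi> (Suc j)) = (case \<pi> (run \<pi> \<phi> j) of None \<Rightarrow> dom (run \<pi> \<phi> j) | Some e \<Rightarrow> insert e (dom (run \<pi> \<phi> j)))"
  by (simp add: oracle_run_Suc dom_oracle_step)

lemma sel_eq_dom_run: "sel \<pi> \<phi> = dom (run \<pi> \<phi> (card (UNIV :: 'e set)))"
  for \<pi> :: "('e::finite, 'o) policy"
proof -
  have "policy_step \<pi> \<phi> = oracle_step \<pi> (\<lambda>e _. \<phi> e)"
    unfolding policy_step_def oracle_step_def ..
  then show ?thesis by (simp add: sel_def final_obs_def oracle_run_def)
qed

lemma map_le_oracle_step: "\<psi> \<subseteq>\<^sub>m oracle_step \<pi> ans \<psi>"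
  by (simp add: oracle_step_def map_le_def split: option.split)

lemma oracle_run_mono: "m \<le> n \<Longrightarrow> oracle_run \<pi> ans m \<subseteq>\<^sub>m oracle_run \<pi> ans n"
proof (induction n)
  case (Suc n)
  then show ?case
    using map_le_trans[OF _ map_le_oracle_step] by (auto simp: le_Suc_eq oracle_run_Suc)
qed simp

lemma dom_oracle_run_mono: "m \<le> n \<Longrightarrow> dom (oracle_run \<pi> ans m) \<subseteq> dom (oracle_run \<pi> ans n)"
  by (rule map_le_implies_dom_le[OF oracle_run_mono])

lemma consistent_oracle_step: "consistent \<phi> \<psi> \<Longrightarrow> consistent \<phi> (oracle_step \<pi> (\<lambda>e _. \<phi> e) \<psi>)"
  unfolding oracle_step_def consistent_def by (auto split: option.split)

lemma consistent_if_map_le: "consistent \<phi> \<psi>' \<Longrightarrow> \<psi> \<subseteq>\<^sub>m \<psi>' \<Longrightarrow> consistent \<phi> \<psi>"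
  unfolding consistent_def map_le_def by (fastforce simp: dom_def)

lemma map_le_map_add_if_consistent: "consistent \<phi> \<psi> \<Longrightarrow> consistent \<phi> \<psi>' \<Longrightarrow> \<psi> \<subseteq>\<^sub>m \<psi> ++ \<psi>'"
  unfolding consistent_def map_le_def map_add_def by (force simp: dom_def split: option.split)

lemma consistent_map_add:
  assumes "consistent \<phi> \<psi>" and "consistent \<phi> \<psi>'"
  shows "consistent \<phi> (\<psi> ++ \<psi>')"
  unfolding consistent_def
proof
  fix e assume "e \<in> dom (\<psi> ++ \<psi>')"
  then consider "e \<in> dom \<psi>'" | "e \<notin> dom \<psi>'" "e \<in> dom \<psi>" by auto
  then show "(\<psi> ++ \<psi>') e = Some (\<phi> e)"
    using assms by cases (simp_all add: consistent_def map_add_dom_app_simps)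
qed

lemma consistent_run: "consistent \<phi> (run \<pi> \<phi> n)"
proof (induction n)
  case 0
  then show ?case by (simp add: consistent_def)
qed (simp add: oracle_run_Suc consistent_oracle_step)

lemma run_eq_oracle_run:
  assumes "consistent \<phi> (oracle_run \<pi> ans n)" and "m \<le> n"
  shows "run \<pi> \<phi> m = oracle_run \<pi> ans m"
  using assms(2)
proof (induction m)
  case (Suc m)
  let ?\<psi> = "oracle_run \<pi> ans m"
  have IH: "run \<pi> \<phi> m = ?\<psi>" using Suc by simp
  have "oracle_step \<pi> (\<lambda>e _. \<phi> e) ?\<psi> = oracle_step \<pi> ans ?\<psi>"
  proof (cases "\<pi> ?\<psi>")
    case (Some e)
    show ?thesis
    proof (cases "e \<in> dom ?\<psi>")
      case False
      then have "oracle_run \<pi> ans (Suc m) e = Some (ans e ?\<psi>)"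
        using Some by (simp add: oracle_run_Suc oracle_step_def)
      then have "oracle_run \<pi> ans n e = Some (ans e ?\<psi>)"
        using oracle_run_mono[OF Suc.prems] by (metis domI map_le_def)
      then have "\<phi> e = ans e ?\<psi>"
        using assms(1) unfolding consistent_def by (metis domI option.inject)
      then show ?thesis using Some False by (simp add: oracle_step_def)
    qed (use Some in \<open>simp add: oracle_step_def\<close>)
  qed (simp add: oracle_step_def)
  then show ?case by (simp only: oracle_run_Suc IH)
qed simp

lemma run_eq_if_consistent:
  "consistent \<phi>' (run \<pi> \<phi> n) \<Longrightarrow> m \<le> n \<Longrightarrow> run \<pi> \<phi>' m = run \<pi> \<phi> m"
  using run_eq_oracle_run[of \<phi>' \<pi> "\<lambda>e _. \<phi> e"] .

lemma sum_diff_chain: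
  fixes D :: "nat \<Rightarrow> 'a set" and c :: "'a \<Rightarrow> 'b::comm_monoid_add"
  assumes "D 0 = {}" and "\<And>i. D i \<subseteq> D (Suc i)" and "finite (D n)"
  shows "(\<Sum>i<n. sum c (D (Suc i) - D i)) = sum c (D n)"
  using assms(3)
proof (induction n)
  case (Suc n)
  have "finite (D n)" using Suc.prems assms(2) finite_subset by blast
  then have "(\<Sum>i<n. sum c (D (Suc i) - D i)) = sum c (D n)" by (rule Suc.IH)
  moreover have "sum c (D (Suc n)) = sum c (D (Suc n) - D n) + sum c (D n)"
    by (rule sum.subset_diff[OF assms(2) Suc.prems])
  ultimately show ?case by (simp add: add.commute)
qed (simp add: assms(1))

section \<open>Expectations under the prior\<close>

definition cond_exp :: "(('e::finite \<Rightarrow> 'o::finite) \<Rightarrow> real) \<Rightarrow> ('e \<rightharpoonup> 'o) \<Rightarrow> (('e \<Rightarrow> 'o) \<Rightarrow> real) \<Rightarrow> real" where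
  "cond_exp p \<psi> g = (\<Sum>\<phi>\<in>{\<phi>. consistent \<phi> \<psi>}. p \<phi> * g \<phi>) / prob_cons p \<psi>"

lemma favg_marg_eq_cond_exp:
  "favg_marg p f e \<psi> = cond_exp p \<psi> (\<lambda>\<phi>. f (dom \<psi> \<union> {e}) \<phi> - f (dom \<psi>) \<phi>)"
  by (simp add: favg_marg_def cond_exp_def)

lemma favg_marg_observed: "e \<in> dom \<psi> \<Longrightarrow> favg_marg p f e \<psi> = 0"
  by (simp add: favg_marg_def insert_absorb)

definition pick_favg :: "(('e::finite \<Rightarrow> 'o::finite) \<Rightarrow> real) \<Rightarrow> ('e set \<Rightarrow> ('e \<Rightarrow> 'o) \<Rightarrow> real)
    \<Rightarrow> ('e \<rightharpoonup> 'o) \<Rightarrow> ('e, 'o) policy \<Rightarrow> ('e \<rightharpoonup> 'o) \<Rightarrow> real" where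
  "pick_favg p f G \<pi> A = (case \<pi> A of None \<Rightarrow> 0 | Some e \<Rightarrow> favg_marg p f e (G ++ A))"

locale realization_prior =
  fixes p :: "('e::finite \<Rightarrow> 'o::finite) \<Rightarrow> real"
  assumes is_prior: "is_prior p"
begin

lemma nonneg: "0 \<le> p \<phi>"
  using is_prior by (simp add: is_prior_def)

lemma pos_iff: "0 < p \<phi> \<longleftrightarrow> p \<phi> \<noteq> 0"
  using nonneg[of \<phi>] by linarith

lemma ex_pos: "\<exists>\<phi>. 0 < p \<phi>"
  using is_prior pos_iff by (force simp: is_prior_def)

lemma le_prob_cons: "consistent \<phi> \<psi> \<Longrightarrow> p \<phi> \<le> prob_cons p \<psi>"
  unfolding prob_cons_def using nonneg
  by (subst sum.remove[of _ \<phi>]) (auto intro: sum_nonneg)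

lemma valid_pr_if_consistent: "0 < p \<phi> \<Longrightarrow> consistent \<phi> \<psi> \<Longrightarrow> valid_pr p \<psi>"
  using le_prob_cons by (fastforce simp: valid_pr_def)

lemma valid_pr_run: "0 < p \<phi> \<Longrightarrow> valid_pr p (run \<pi> \<phi> n)"
  using valid_pr_if_consistent consistent_run by blast

lemma obtain_consistent:
  assumes "valid_pr p \<psi>"
  obtains \<phi> where "0 < p \<phi>" "consistent \<phi> \<psi>"
proof -
  have "(\<Sum>\<phi>\<in>{\<phi>. consistent \<phi> \<psi>}. p \<phi>) \<noteq> 0"
    using assms by (simp add: valid_pr_def prob_cons_def)
  then have "\<not> (\<forall>\<phi>\<in>{\<phi>. consistent \<phi> \<psi>}. p \<phi> = 0)"
    using sum.neutral by blast
  then obtain \<phi> where "consistent \<phi> \<psi>" "p \<phi> \<noteq> 0"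
    by blast
  then show ?thesis using that pos_iff by blast
qed

lemma states_at_iff:
  assumes "valid_pr p \<psi>"
  shows "s \<in> states_at p e \<psi> \<longleftrightarrow> (\<exists>\<phi>. 0 < p \<phi> \<and> consistent \<phi> \<psi> \<and> \<phi> e = s)"
  using assms by (auto simp: states_at_def valid_pr_def zero_less_divide_iff)

lemma states_at_nonempty: "valid_pr p \<psi> \<Longrightarrow> states_at p e \<psi> \<noteq> {}"
  by (metis obtain_consistent states_at_iff empty_iff)

lemma expectation_mono:
  assumes "\<And>\<phi>. 0 < p \<phi> \<Longrightarrow> x \<phi> \<le> y \<phi>"
  shows "(\<Sum>\<phi>\<in>UNIV. p \<phi> * x \<phi>) \<le> (\<Sum>\<phi>\<in>UNIV. p \<phi> * y \<phi>)"
proof (rule sum_mono)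
  fix \<phi>
  show "p \<phi> * x \<phi> \<le> p \<phi> * y \<phi>"
  proof (cases "p \<phi> = 0")
    case False
    then show ?thesis using assms pos_iff nonneg by (simp add: mult_left_mono)
  qed simp
qed

text \<open>The hypotheses say that \<open>H \<Phi>\<close> is revealed by observing it and that \<open>g \<Phi>\<close> depends only on it.\<close>

lemma total_expectation:
  assumes cons: "\<And>\<Phi>. 0 < p \<Phi> \<Longrightarrow> consistent \<Phi> (H \<Phi>)"
    and det: "\<And>\<Phi> \<Phi>'. 0 < p \<Phi> \<Longrightarrow> 0 < p \<Phi>' \<Longrightarrow> consistent \<Phi>' (H \<Phi>) \<Longrightarrow> H \<Phi>' = H \<Phi> \<and> g \<Phi>' = g \<Phi>"
  shows "(\<Sum>\<Phi>\<in>UNIV. p \<Phi> * cond_exp p (H \<Phi>) (g \<Phi>)) = (\<Sum>\<Phi>\<in>UNIV. p \<Phi> * g \<Phi> \<Phi>)"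
proof -
  let ?P = "\<lambda>\<Phi>. prob_cons p (H \<Phi>)"
  let ?t = "\<lambda>\<Phi>'. p \<Phi>' * g \<Phi>' \<Phi>' / ?P \<Phi>'"
  have sym: "(if consistent \<Phi>' (H \<Phi>) then p \<Phi> * (p \<Phi>' * g \<Phi> \<Phi>' / ?P \<Phi>) else 0)
      = (if consistent \<Phi> (H \<Phi>') then p \<Phi> * ?t \<Phi>' else 0)" for \<Phi> \<Phi>'
  proof (cases "0 < p \<Phi> \<and> 0 < p \<Phi>'")
    case True
    then have iff: "consistent \<Phi>' (H \<Phi>) \<longleftrightarrow> consistent \<Phi> (H \<Phi>')"
      using cons[of \<Phi>] cons[of \<Phi>'] det[of \<Phi> \<Phi>'] det[of \<Phi>' \<Phi>] by metis
    show ?thesis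
    proof (cases "consistent \<Phi>' (H \<Phi>)")
      case consistent: True
      then have eq: "H \<Phi>' = H \<Phi>" "g \<Phi>' = g \<Phi>" using det True by blast+
      have "consistent \<Phi> (H \<Phi>')" using consistent iff by blast
      then show ?thesis using consistent by (simp add: eq)
    next
      case False
      then have "\<not> consistent \<Phi> (H \<Phi>')" using iff by blast
      then show ?thesis using False by simp
    qed
  qed (auto simp: pos_iff)
  have inner: "(\<Sum>\<Phi>\<in>UNIV. if consistent \<Phi> (H \<Phi>') then p \<Phi> * ?t \<Phi>' else 0) = p \<Phi>' * g \<Phi>' \<Phi>'" for \<Phi>'
  proof (cases "0 < p \<Phi>'")
    case True
    then have "0 < ?P \<Phi>'" using valid_pr_if_consistent cons by (simp add: valid_pr_def)
    moreover have "(\<Sum>\<Phi>\<in>UNIV. if consistent \<Phi> (H \<Phi>') then p \<Phi> * ?t \<Phi>' else 0) = ?P \<Phi>' * ?t \<Phi>'"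
      by (simp add: sum.If_cases prob_cons_def sum_distrib_right sum_divide_distrib)
    ultimately show ?thesis by simp
  qed (simp add: pos_iff cong: if_cong)
  have "(\<Sum>\<Phi>\<in>UNIV. p \<Phi> * cond_exp p (H \<Phi>) (g \<Phi>))
      = (\<Sum>\<Phi>\<in>UNIV. \<Sum>\<Phi>'\<in>UNIV. if consistent \<Phi>' (H \<Phi>) then p \<Phi> * (p \<Phi>' * g \<Phi> \<Phi>' / ?P \<Phi>) else 0)"
    by (simp add: cond_exp_def sum.If_cases sum_divide_distrib sum_distrib_left)
  also have "\<dots> = (\<Sum>\<Phi>'\<in>UNIV. \<Sum>\<Phi>\<in>UNIV. if consistent \<Phi> (H \<Phi>') then p \<Phi> * ?t \<Phi>' else 0)"
    by (subst sum.swap) (simp only: sym)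
  also have "\<dots> = (\<Sum>\<Phi>\<in>UNIV. p \<Phi> * g \<Phi> \<Phi>)"
    by (simp only: inner)
  finally show ?thesis .
qed

lemma le_fwc_pol:
  assumes "\<And>\<phi>. 0 < p \<phi> \<Longrightarrow> c \<le> f (Sel \<phi>) \<phi>"
  shows "c \<le> fwc_pol p f Sel"
  unfolding fwc_pol_def using ex_pos assms by (subst Min_ge_iff) auto

lemma fwc_pol_le_value:
  assumes "0 < p \<phi>"
  shows "fwc_pol p f Sel \<le> f (Sel \<phi>) \<phi>"
  unfolding fwc_pol_def using assms by (intro Min_le) auto

lemma expected_pick_favg:
  "(\<Sum>\<Phi>\<in>UNIV. p \<Phi> * pick_favg p f (run \<pi>' \<Phi> n) \<pi> (run \<pi> \<Phi> i))
   = (\<Sum>\<Phi>\<in>UNIV. p \<Phi> * (f (dom (run \<pi>' \<Phi> n ++ run \<pi> \<Phi> (Suc i))) \<Phi> - f (dom (run \<pi>' \<Phi> n ++ run \<pi> \<Phi> i)) \<Phi>))"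
proof -
  define H where "H \<Phi> = run \<pi>' \<Phi> n ++ run \<pi> \<Phi> i" for \<Phi>
  define g where "g \<Phi> = (\<lambda>\<Phi>'. f (dom (run \<pi>' \<Phi> n ++ run \<pi> \<Phi> (Suc i))) \<Phi>' - f (dom (H \<Phi>)) \<Phi>')" for \<Phi>
  have pick: "pick_favg p f (run \<pi>' \<Phi> n) \<pi> (run \<pi> \<Phi> i) = cond_exp p (H \<Phi>) (g \<Phi>)" for \<Phi>
  proof (cases "\<pi> (run \<pi> \<Phi> i)")
    case None
    then have "g \<Phi> = (\<lambda>_. 0)" by (simp add: g_def H_def dom_run_Suc)
    then show ?thesis using None by (simp add: pick_favg_def cond_exp_def)
  next
    case (Some e)
    then have "g \<Phi> = (\<lambda>\<Phi>'. f (dom (H \<Phi>) \<union> {e}) \<Phi>' - f (dom (H \<Phi>)) \<Phi>')"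
      by (simp add: g_def H_def dom_run_Suc Un_commute)
    then show ?thesis using Some by (simp add: pick_favg_def favg_marg_eq_cond_exp H_def)
  qed
  have cons: "consistent \<Phi> (H \<Phi>)" for \<Phi>
    by (simp add: H_def consistent_map_add consistent_run)
  have det: "H \<Phi>' = H \<Phi> \<and> g \<Phi>' = g \<Phi>" if "consistent \<Phi>' (H \<Phi>)" for \<Phi> \<Phi>'
  proof -
    have "run \<pi>' \<Phi> n \<subseteq>\<^sub>m H \<Phi>"
      unfolding H_def by (rule map_le_map_add_if_consistent[OF consistent_run consistent_run])
    then have "run \<pi>' \<Phi>' n = run \<pi>' \<Phi> n"
      using that consistent_if_map_le run_eq_if_consistent by blast
    moreover have "run \<pi> \<Phi>' i = run \<pi> \<Phi> i"
      using that consistent_if_map_le run_eq_if_consistent map_le_map_add unfolding H_def by blast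
    ultimately show ?thesis by (simp add: H_def g_def dom_run_Suc split: option.split)
  qed
  have "(\<Sum>\<Phi>\<in>UNIV. p \<Phi> * cond_exp p (H \<Phi>) (g \<Phi>)) = (\<Sum>\<Phi>\<in>UNIV. p \<Phi> * g \<Phi> \<Phi>)"
    using cons det by (intro total_expectation)
  then show ?thesis by (simp add: pick g_def H_def)
qed

lemma expected_value_after:
  "(\<Sum>\<Phi>\<in>UNIV. p \<Phi> * f (dom (run \<pi>' \<Phi> n ++ run \<pi> \<Phi> m)) \<Phi>)
   = (\<Sum>\<Phi>\<in>UNIV. p \<Phi> * f (dom (run \<pi>' \<Phi> n)) \<Phi>)
     + (\<Sum>i<m. \<Sum>\<Phi>\<in>UNIV. p \<Phi> * pick_favg p f (run \<pi>' \<Phi> n) \<pi> (run \<pi> \<Phi> i))"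
proof -
  define F where "F i \<Phi> = f (dom (run \<pi>' \<Phi> n ++ run \<pi> \<Phi> i)) \<Phi>" for i \<Phi>
  have "(\<Sum>i<m. \<Sum>\<Phi>\<in>UNIV. p \<Phi> * pick_favg p f (run \<pi>' \<Phi> n) \<pi> (run \<pi> \<Phi> i))
      = (\<Sum>\<Phi>\<in>UNIV. p \<Phi> * (\<Sum>i<m. F (Suc i) \<Phi> - F i \<Phi>))"
    by (simp add: expected_pick_favg F_def sum_distrib_left sum.swap[of _ "{..<m}"])
  also have "\<dots> = (\<Sum>\<Phi>\<in>UNIV. p \<Phi> * (F m \<Phi> - F 0 \<Phi>))"
    using sum_lessThan_telescope[of "\<lambda>i. F i \<Phi>" m for \<Phi>] by simp
  finally show ?thesis by (simp add: F_def algebra_simps sum_subtractf)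
qed

end

section \<open>The worst-case adversary\<close>

definition worst_state :: "(('e::finite \<Rightarrow> 'o::finite) \<Rightarrow> real) \<Rightarrow> ('e set \<Rightarrow> ('e \<Rightarrow> 'o) \<Rightarrow> real)
    \<Rightarrow> 'e \<Rightarrow> ('e \<rightharpoonup> 'o) \<Rightarrow> 'o" where
  "worst_state p f e \<psi> = arg_min_on (\<lambda>s. cond_f p f (dom \<psi> \<union> {e}) (\<psi>(e \<mapsto> s)) - cond_f p f (dom \<psi>) \<psi>)
     (states_at p e \<psi>)"

definition adversary_answer :: "(('e::finite \<Rightarrow> 'o::finite) \<Rightarrow> real) \<Rightarrow> ('e set \<Rightarrow> ('e \<Rightarrow> 'o) \<Rightarrow> real)
    \<Rightarrow> ('e \<rightharpoonup> 'o) \<Rightarrow> 'e \<Rightarrow> 'o" where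
  "adversary_answer p f \<psi> e = (case \<psi> e of Some s \<Rightarrow> s | None \<Rightarrow> worst_state p f e \<psi>)"

definition adversary_run :: "(('e::finite \<Rightarrow> 'o::finite) \<Rightarrow> real) \<Rightarrow> ('e set \<Rightarrow> ('e \<Rightarrow> 'o) \<Rightarrow> real)
    \<Rightarrow> ('e \<rightharpoonup> 'o) \<Rightarrow> ('e, 'o) policy \<Rightarrow> nat \<Rightarrow> ('e \<rightharpoonup> 'o)" where
  "adversary_run p f G \<pi> = oracle_run \<pi> (\<lambda>e A. adversary_answer p f (G ++ A) e)"

lemma adversary_run_Suc:
  "G ++ adversary_run p f G \<pi> (Suc i) = (case \<pi> (adversary_run p f G \<pi> i) of
      None \<Rightarrow> G ++ adversary_run p f G \<pi> i
    | Some e \<Rightarrow> if e \<in> dom (adversary_run p f G \<pi> i) then G ++ adversary_run p f G \<pi> i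
        else (G ++ adversary_run p f G \<pi> i)(e \<mapsto> adversary_answer p f (G ++ adversary_run p f G \<pi> i) e))"
  by (simp add: adversary_run_def oracle_run_Suc oracle_step_def split: option.split)

context realization_prior
begin

lemma worst_state:
  assumes "valid_pr p \<psi>"
  shows "worst_state p f e \<psi> \<in> states_at p e \<psi>"
    and "cond_f p f (dom \<psi> \<union> {e}) (\<psi>(e \<mapsto> worst_state p f e \<psi>)) - cond_f p f (dom \<psi>) \<psi> = fwc_marg p f e \<psi>"
proof -
  let ?m = "\<lambda>s. cond_f p f (dom \<psi> \<union> {e}) (\<psi>(e \<mapsto> s)) - cond_f p f (dom \<psi>) \<psi>"
  have fin: "finite (states_at p e \<psi>)" and ne: "states_at p e \<psi> \<noteq> {}"
    using states_at_nonempty[OF assms] by simp_all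
  show mem: "worst_state p f e \<psi> \<in> states_at p e \<psi>"
    unfolding worst_state_def by (rule arg_min_if_finite(1)[OF fin ne])
  have "Min (?m ` states_at p e \<psi>) = ?m (worst_state p f e \<psi>)"
    using mem arg_min_least[OF fin ne, of _ ?m] fin by (intro Min_eqI) (auto simp: worst_state_def)
  then show "?m (worst_state p f e \<psi>) = fwc_marg p f e \<psi>"
    by (simp add: fwc_marg_def)
qed

lemma adversary_update:
  fixes f :: "'e set \<Rightarrow> ('e \<Rightarrow> 'o) \<Rightarrow> real" and e :: 'e
  assumes "valid_pr p \<psi>"
  defines "\<psi>' \<equiv> \<psi>(e \<mapsto> adversary_answer p f \<psi> e)"
  shows "valid_pr p \<psi>'" and "\<psi> \<subseteq>\<^sub>m \<psi>'"
    and "cond_f p f (dom \<psi>') \<psi>' - cond_f p f (dom \<psi>) \<psi> = (if e \<in> dom \<psi> then 0 else fwc_marg p f e \<psi>)"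
proof -
  consider (observed) "e \<in> dom \<psi>" | (new) "e \<notin> dom \<psi>" by blast
  then have "valid_pr p \<psi>' \<and> \<psi> \<subseteq>\<^sub>m \<psi>' \<and>
      cond_f p f (dom \<psi>') \<psi>' - cond_f p f (dom \<psi>) \<psi> = (if e \<in> dom \<psi> then 0 else fwc_marg p f e \<psi>)"
  proof cases
    case observed
    then have "\<psi>' = \<psi>" by (auto simp: \<psi>'_def adversary_answer_def)
    then show ?thesis using assms(1) observed by simp
  next
    case new
    then have \<psi>': "\<psi>' = \<psi>(e \<mapsto> worst_state p f e \<psi>)"
      by (simp add: \<psi>'_def adversary_answer_def domIff)
    obtain \<phi> where "0 < p \<phi>" "consistent \<phi> \<psi>" "\<phi> e = worst_state p f e \<psi>"
      using worst_state(1)[OF assms(1)] states_at_iff[OF assms(1)] by blast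
    then have "valid_pr p \<psi>'"
      by (intro valid_pr_if_consistent[of \<phi>]) (auto simp: \<psi>' consistent_def)
    moreover have "\<psi> \<subseteq>\<^sub>m \<psi>'" using new by (auto simp: \<psi>' map_le_def)
    ultimately show ?thesis using worst_state(2)[OF assms(1)] new by (simp add: \<psi>')
  qed
  then show "valid_pr p \<psi>'" "\<psi> \<subseteq>\<^sub>m \<psi>'"
    "cond_f p f (dom \<psi>') \<psi>' - cond_f p f (dom \<psi>) \<psi> = (if e \<in> dom \<psi> then 0 else fwc_marg p f e \<psi>)"
    by blast+
qed

lemma adversary_run_invariant:
  assumes "valid_pr p G"
  shows "valid_pr p (G ++ adversary_run p f G \<pi> i) \<and> G \<subseteq>\<^sub>m G ++ adversary_run p f G \<pi> i"
proof (induction i)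
  case 0
  then show ?case using assms by (simp add: adversary_run_def)
next
  case (Suc i)
  then show ?case
    using adversary_update(1,2) map_le_trans by (simp add: adversary_run_Suc split: option.split) blast
qed

lemma adversary_run_value:
  fixes f :: "'e set \<Rightarrow> ('e \<Rightarrow> 'o) \<Rightarrow> real" and \<pi> :: "('e, 'o) policy" and B :: "'e \<Rightarrow> real"
  assumes valid: "valid_pr p G"
    and bound: "\<And>\<psi> x. valid_pr p \<psi> \<Longrightarrow> G \<subseteq>\<^sub>m \<psi> \<Longrightarrow> x \<notin> dom \<psi> \<Longrightarrow> fwc_marg p f x \<psi> \<le> B x"
  defines "A \<equiv> adversary_run p f G \<pi>"
  shows "cond_f p f (dom (G ++ A n)) (G ++ A n) \<le> cond_f p f (dom G) G + (\<Sum>x\<in>dom (A n) - dom G. B x)"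
proof -
  define T where "T i = cond_f p f (dom (G ++ A i)) (G ++ A i)" for i
  define D where "D i = dom (A i) - dom G" for i
  have step: "T (Suc i) - T i \<le> (\<Sum>x\<in>D (Suc i) - D i. B x)" for i
  proof (cases "\<pi> (A i)")
    case (Some e)
    have inv: "valid_pr p (G ++ A i)" "G \<subseteq>\<^sub>m G ++ A i"
      using adversary_run_invariant[OF valid] by (simp_all add: A_def)
    show ?thesis
    proof (cases "e \<in> dom (A i)")
      case False
      then have T: "T (Suc i) - T i = (if e \<in> dom (G ++ A i) then 0 else fwc_marg p f e (G ++ A i))"
        using adversary_update(3)[OF inv(1)] Some by (simp add: T_def A_def adversary_run_Suc)
      have D: "D (Suc i) - D i = (if e \<in> dom G then {} else {e})"
        using Some False by (auto simp: D_def A_def adversary_run_def oracle_run_Suc dom_oracle_step)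
      show ?thesis using bound[OF inv] False by (simp add: T D)
    next
      case True
      then have "A (Suc i) = A i"
        using Some by (simp add: A_def adversary_run_def oracle_run_Suc oracle_step_def)
      then show ?thesis by (simp add: T_def D_def)
    qed
  next
    case None
    then have "A (Suc i) = A i" by (simp add: A_def adversary_run_def oracle_run_Suc oracle_step_def)
    then show ?thesis by (simp add: T_def D_def)
  qed
  have "T n = T 0 + (\<Sum>i<n. T (Suc i) - T i)"
    by (simp add: sum_lessThan_telescope)
  also have "\<dots> \<le> T 0 + (\<Sum>i<n. \<Sum>x\<in>D (Suc i) - D i. B x)"
    using step by (intro add_left_mono sum_mono)
  also have "(\<Sum>i<n. \<Sum>x\<in>D (Suc i) - D i. B x) = sum B (D n)"
  proof (rule sum_diff_chain)
    have "dom (A i) \<subseteq> dom (A (Suc i))" for i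
      unfolding A_def adversary_run_def by (rule dom_oracle_run_mono) simp
    then show "D i \<subseteq> D (Suc i)" for i by (auto simp: D_def)
  qed (simp_all add: D_def A_def adversary_run_def)
  finally show ?thesis by (simp add: T_def D_def A_def adversary_run_def)
qed

end

locale adaptive_objective = realization_prior p
  for p :: "('e::finite \<Rightarrow> 'o::finite) \<Rightarrow> real" +
  fixes f :: "'e set \<Rightarrow> ('e \<Rightarrow> 'o) \<Rightarrow> real"
  assumes nonneg_f: "\<forall>S \<phi>. 0 \<le> f S \<phi>"
    and wc_monotone: "wc_monotone p f"
    and minimal_dependency: "minimal_dependency p f"
begin

lemma cond_f_realized: "0 < p \<phi> \<Longrightarrow> consistent \<phi> \<psi> \<Longrightarrow> cond_f p f (dom \<psi>) \<psi> = f (dom \<psi>) \<phi>"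
  using minimal_dependency valid_pr_if_consistent by (simp add: minimal_dependency_def)

lemma fwc_marg_le_realized:
  assumes "0 < p \<phi>" and "consistent \<phi> \<psi>"
  shows "fwc_marg p f e \<psi> \<le> f (dom \<psi> \<union> {e}) \<phi> - f (dom \<psi>) \<phi>"
proof -
  have valid: "valid_pr p \<psi>" using assms by (rule valid_pr_if_consistent)
  have "\<phi> e \<in> states_at p e \<psi>" using states_at_iff[OF valid] assms by blast
  then have "fwc_marg p f e \<psi> \<le> cond_f p f (dom \<psi> \<union> {e}) (\<psi>(e \<mapsto> \<phi> e)) - cond_f p f (dom \<psi>) \<psi>"
    unfolding fwc_marg_def by (intro Min_le) auto
  moreover have "consistent \<phi> (\<psi>(e \<mapsto> \<phi> e))" using assms(2) by (simp add: consistent_def)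
  ultimately show ?thesis
    using cond_f_realized[OF assms] cond_f_realized[OF assms(1), of "\<psi>(e \<mapsto> \<phi> e)"] by simp
qed

lemma mono_realized:
  assumes "0 < p \<phi>" and "S \<subseteq> T"
  shows "f S \<phi> \<le> f T \<phi>"
proof -
  have insert_mono: "f A \<phi> \<le> f (insert e A) \<phi>" for A e
  proof (cases "e \<in> A")
    case False
    define \<psi> where "\<psi> = (\<lambda>x. if x \<in> A then Some (\<phi> x) else None)"
    have cons: "consistent \<phi> \<psi>" and dom: "dom \<psi> = A"
      by (auto simp: \<psi>_def consistent_def dom_def)
    have "0 \<le> fwc_marg p f e \<psi>"
      using wc_monotone valid_pr_if_consistent[OF assms(1) cons] False dom
      by (simp add: wc_monotone_def)
    then show ?thesis using fwc_marg_le_realized[OF assms(1) cons, of e] dom by simp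
  qed (simp add: insert_absorb)
  have "f S \<phi> \<le> f (S \<union> D) \<phi>" for D
    using finite[of D]
  proof (induction D rule: finite_induct)
    case (insert x F)
    then show ?case using insert_mono[of "S \<union> F" x] by simp
  qed simp
  from this[of T] show ?thesis using assms(2) by (simp add: sup.absorb2)
qed

lemma favg_marg_nonneg:
  assumes "valid_pr p \<psi>"
  shows "0 \<le> favg_marg p f e \<psi>"
  unfolding favg_marg_def
proof (intro divide_nonneg_pos sum_nonneg)
  show "0 < prob_cons p \<psi>" using assms by (simp add: valid_pr_def)
  show "0 \<le> p \<phi> * (f (dom \<psi> \<union> {e}) \<phi> - f (dom \<psi>) \<phi>)" for \<phi>
  proof (cases "p \<phi> = 0")
    case False
    then have "f (dom \<psi>) \<phi> \<le> f (dom \<psi> \<union> {e}) \<phi>" using mono_realized pos_iff by blast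
    then show ?thesis using nonneg by simp
  qed simp
qed

lemma adversarial_realization:
  fixes \<pi> :: "('e, 'o) policy" and G :: "'e \<rightharpoonup> 'o" and B :: "'e \<Rightarrow> real"
  assumes valid: "valid_pr p G"
    and bound: "\<And>\<psi> x. valid_pr p \<psi> \<Longrightarrow> G \<subseteq>\<^sub>m \<psi> \<Longrightarrow> x \<notin> dom \<psi> \<Longrightarrow> fwc_marg p f x \<psi> \<le> B x"
  obtains \<phi> where "0 < p \<phi>"
    and "f (dom G \<union> sel \<pi> \<phi>) \<phi> \<le> cond_f p f (dom G) G + (\<Sum>x\<in>sel \<pi> \<phi> - dom G. B x)"
proof -
  let ?N = "card (UNIV :: 'e set)"
  let ?A = "adversary_run p f G \<pi> ?N"
  obtain \<phi> where pos: "0 < p \<phi>" and cons: "consistent \<phi> (G ++ ?A)"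
    using obtain_consistent adversary_run_invariant[OF valid] by blast
  then have "consistent \<phi> ?A" using consistent_if_map_le map_le_map_add by blast
  then have "run \<pi> \<phi> ?N = ?A"
    unfolding adversary_run_def by (rule run_eq_oracle_run) simp
  then have "sel \<pi> \<phi> = dom ?A" by (simp add: sel_eq_dom_run)
  then have "f (dom G \<union> sel \<pi> \<phi>) \<phi> = cond_f p f (dom (G ++ ?A)) (G ++ ?A)"
    using cond_f_realized[OF pos cons] by (simp add: Un_commute)
  then show ?thesis
    using that[OF pos] adversary_run_value[OF valid bound] \<open>sel \<pi> \<phi> = dom ?A\<close> by simp
qed

lemma favg_pol_mono:
  assumes "\<And>\<phi>. 0 < p \<phi> \<Longrightarrow> S \<phi> \<subseteq> T \<phi>"
  shows "favg_pol p f S \<le> favg_pol p f T"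
  unfolding favg_pol_def using assms mono_realized by (intro expectation_mono) blast

end

section \<open>Meta-greedy runs on a partition matroid\<close>

locale block_partition =
  fixes b :: nat and Ez :: "nat \<Rightarrow> 'e set"
  assumes disjoint: "\<forall>z\<in>{1..b}. \<forall>z'\<in>{1..b}. z \<noteq> z' \<longrightarrow> Ez z \<inter> Ez z' = {}"
    and cover: "(\<Union>z\<in>{1..b}. Ez z) = UNIV"
begin

definition block :: "'e \<Rightarrow> nat" where
  "block x = (SOME z. z \<in> {1..b} \<and> x \<in> Ez z)"

lemma block: "block x \<in> {1..b}" "x \<in> Ez (block x)"
proof -
  have "\<exists>z. z \<in> {1..b} \<and> x \<in> Ez z" using cover by blast
  then show "block x \<in> {1..b}" "x \<in> Ez (block x)"
    unfolding block_def by (metis (mono_tags, lifting) someI_ex)+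
qed

lemma block_eqI: "z \<in> {1..b} \<Longrightarrow> x \<in> Ez z \<Longrightarrow> block x = z"
  using block disjoint by blast

lemma sum_by_block:
  assumes "finite S"
  shows "(\<Sum>x\<in>S. h (block x)) = (\<Sum>z\<in>{1..b}. of_nat (card (S \<inter> Ez z)) * h z)"
proof -
  have "(\<Union>z\<in>{1..b}. S \<inter> Ez z) = S" using cover by blast
  then have "(\<Sum>x\<in>S. h (block x)) = (\<Sum>x\<in>(\<Union>z\<in>{1..b}. S \<inter> Ez z). h (block x))"
    by simp
  also have "\<dots> = (\<Sum>z\<in>{1..b}. \<Sum>x\<in>S \<inter> Ez z. h (block x))"
    using assms disjoint by (intro sum.UNION_disjoint) auto
  also have "\<dots> = (\<Sum>z\<in>{1..b}. \<Sum>x\<in>S \<inter> Ez z. h z)"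
    using block_eqI by (intro sum.cong refl) auto
  finally show ?thesis by simp
qed

lemma sum_by_block_le_quota:
  fixes h :: "nat \<Rightarrow> real"
  assumes "finite S" and "pm_indep b Ez k S" and "\<forall>z\<in>{1..b}. 0 \<le> h z"
  shows "(\<Sum>x\<in>S. h (block x)) \<le> (\<Sum>z\<in>{1..b}. real (k z) * h z)"
  unfolding sum_by_block[OF assms(1)]
  using assms(2,3) by (intro sum_mono mult_right_mono) (auto simp: pm_indep_def)

end

definition diminishing :: "(('e::finite \<Rightarrow> 'o::finite) \<Rightarrow> real) \<Rightarrow> ('e \<Rightarrow> ('e \<rightharpoonup> 'o) \<Rightarrow> real) \<Rightarrow> bool" where
  "diminishing p s \<longleftrightarrow> (\<forall>\<psi> \<psi>' e. valid_pr p \<psi> \<and> valid_pr p \<psi>' \<and> \<psi> \<subseteq>\<^sub>m \<psi>' \<and> e \<notin> dom \<psi>'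
      \<longrightarrow> s e \<psi>' \<le> s e \<psi>)"

lemma wc_submodular_iff_diminishing: "wc_submodular p f \<longleftrightarrow> diminishing p (fwc_marg p f)"
  by (simp add: wc_submodular_def diminishing_def)

lemma adaptive_submodular_iff_diminishing: "adaptive_submodular p f \<longleftrightarrow> diminishing p (favg_marg p f)"
  by (simp add: adaptive_submodular_def diminishing_def)

locale meta_greedy_run = realization_prior p + block_partition b Ez
  for p :: "('e::finite \<Rightarrow> 'o::finite) \<Rightarrow> real" and b and Ez :: "nat \<Rightarrow> 'e set" +
  fixes s :: "'e \<Rightarrow> ('e \<rightharpoonup> 'o) \<Rightarrow> real" and q :: "nat \<Rightarrow> nat" and \<pi> :: "('e, 'o) policy"
  assumes quota: "\<forall>z\<in>{1..b}. 1 \<le> q z \<and> q z \<le> card (Ez z)"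
    and greedy: "meta_greedy p s b Ez q \<pi>"
    and score_nonneg: "\<And>\<psi> e. valid_pr p \<psi> \<Longrightarrow> e \<notin> dom \<psi> \<Longrightarrow> 0 \<le> s e \<psi>"
begin

lemma greedy_pick:
  assumes "valid_pr p \<psi>" and "\<pi> \<psi> = Some e"
  obtains z where "z \<in> {1..b}" and "e \<in> Ez z - dom \<psi>" and "card (dom \<psi> \<inter> Ez z) < q z"
    and "\<forall>e'\<in>Ez z - dom \<psi>. s e' \<psi> \<le> s e \<psi>"
proof -
  let ?unfilled = "\<lambda>z. z \<in> {1..b} \<and> card (dom \<psi> \<inter> Ez z) < q z"
  have choice: "if \<exists>z. ?unfilled z then
      \<exists>e. \<pi> \<psi> = Some e \<and> e \<in> Ez (LEAST z. ?unfilled z) - dom \<psi> \<and>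
        (\<forall>e'\<in>Ez (LEAST z. ?unfilled z) - dom \<psi>. s e' \<psi> \<le> s e \<psi>)
    else \<pi> \<psi> = None"
    using greedy assms(1) unfolding meta_greedy_def Let_def by (metis (no_types, lifting))
  then have ex: "\<exists>z. ?unfilled z" using assms(2) by (metis option.distinct(1))
  define z where "z = (LEAST z. ?unfilled z)"
  have "?unfilled z" unfolding z_def using ex by (rule LeastI_ex)
  moreover obtain e' where "\<pi> \<psi> = Some e'" "e' \<in> Ez z - dom \<psi>" "\<forall>e''\<in>Ez z - dom \<psi>. s e'' \<psi> \<le> s e' \<psi>"
    using choice[unfolded if_P[OF ex], folded z_def] by blast
  ultimately show ?thesis using assms(2) that by auto
qed

lemma greedy_continues:
  assumes "valid_pr p \<psi>" and "z \<in> {1..b}" and "card (dom \<psi> \<inter> Ez z) < q z"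
  shows "\<pi> \<psi> \<noteq> None"
  using greedy assms unfolding meta_greedy_def by (metis (no_types, lifting) option.distinct(1))

lemma run_pick:
  assumes "0 < p \<phi>" and "\<pi> (run \<pi> \<phi> j) = Some e"
  obtains z where "z \<in> {1..b}" and "e \<in> Ez z - dom (run \<pi> \<phi> j)" and "card (dom (run \<pi> \<phi> j) \<inter> Ez z) < q z"
    and "\<forall>e'\<in>Ez z - dom (run \<pi> \<phi> j). s e' (run \<pi> \<phi> j) \<le> s e (run \<pi> \<phi> j)"
  using greedy_pick[OF valid_pr_run[OF assms(1)] assms(2)] by blast

lemma card_run_block_le_quota:
  assumes "0 < p \<phi>" and "z \<in> {1..b}"
  shows "card (dom (run \<pi> \<phi> j) \<inter> Ez z) \<le> q z"
  using assms(2)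
proof (induction j arbitrary: z)
  case (Suc j)
  show ?case
  proof (cases "\<pi> (run \<pi> \<phi> j)")
    case (Some e)
    then obtain z' where z': "z' \<in> {1..b}" "e \<in> Ez z' - dom (run \<pi> \<phi> j)" "card (dom (run \<pi> \<phi> j) \<inter> Ez z') < q z'"
      using run_pick[OF assms(1)] by blast
    show ?thesis
    proof (cases "z = z'")
      case False
      then have "e \<notin> Ez z" using disjoint z' Suc.prems by blast
      then show ?thesis using Suc Some by (simp add: dom_run_Suc)
    qed (use Some z' in \<open>simp add: dom_run_Suc\<close>)
  qed (use Suc in \<open>simp add: dom_run_Suc\<close>)
qed simp

lemma run_grows_until_filled:
  assumes "0 < p \<phi>"
  shows "j \<le> card (dom (run \<pi> \<phi> j)) \<or> (\<forall>z\<in>{1..b}. q z \<le> card (dom (run \<pi> \<phi> j) \<inter> Ez z))"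
proof (induction j)
  case (Suc j)
  show ?case
  proof (cases "\<forall>z\<in>{1..b}. q z \<le> card (dom (run \<pi> \<phi> j) \<inter> Ez z)")
    case True
    have "dom (run \<pi> \<phi> j) \<inter> Ez z \<subseteq> dom (run \<pi> \<phi> (Suc j)) \<inter> Ez z" for z
      using dom_oracle_run_mono[of j "Suc j" \<pi> "\<lambda>e _. \<phi> e"] by auto
    then have "card (dom (run \<pi> \<phi> j) \<inter> Ez z) \<le> card (dom (run \<pi> \<phi> (Suc j)) \<inter> Ez z)" for z
      by (intro card_mono) auto
    then show ?thesis using True order_trans by blast
  next
    case False
    then have grow: "j \<le> card (dom (run \<pi> \<phi> j))" using Suc.IH by blast
    obtain z where "z \<in> {1..b}" "card (dom (run \<pi> \<phi> j) \<inter> Ez z) < q z" using False by force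
    then obtain e where e: "\<pi> (run \<pi> \<phi> j) = Some e"
      using greedy_continues[OF valid_pr_run[OF assms]] by blast
    then have "e \<notin> dom (run \<pi> \<phi> j)" using run_pick[OF assms] by blast
    then have "card (dom (run \<pi> \<phi> (Suc j))) = Suc (card (dom (run \<pi> \<phi> j)))"
      using e by (simp add: dom_run_Suc)
    then show ?thesis using grow by simp
  qed
qed simp

lemma run_filled:
  assumes "0 < p \<phi>" and "z \<in> {1..b}"
  shows "card (dom (run \<pi> \<phi> (card (UNIV :: 'e set))) \<inter> Ez z) = q z"
proof -
  have "q z \<le> card (dom (run \<pi> \<phi> (card (UNIV :: 'e set))) \<inter> Ez z)"
  proof (cases "card (UNIV :: 'e set) \<le> card (dom (run \<pi> \<phi> (card (UNIV :: 'e set))))")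
    case True
    then have "dom (run \<pi> \<phi> (card (UNIV :: 'e set))) = UNIV"
      using card_seteq[OF finite_UNIV subset_UNIV] by blast
    then show ?thesis using quota assms(2) by simp
  next
    case False
    then show ?thesis using run_grows_until_filled[OF assms(1), of "card (UNIV :: 'e set)"] assms(2) by blast
  qed
  then show ?thesis using card_run_block_le_quota[OF assms] by (simp add: le_antisym)
qed

definition in_round :: "('e \<Rightarrow> 'o) \<Rightarrow> nat \<Rightarrow> nat \<Rightarrow> bool" where
  "in_round \<phi> j z \<longleftrightarrow> (\<exists>e. \<pi> (run \<pi> \<phi> j) = Some e \<and> e \<in> Ez z)"

definition gain :: "('e \<Rightarrow> 'o) \<Rightarrow> nat \<Rightarrow> real" where
  "gain \<phi> j = (case \<pi> (run \<pi> \<phi> j) of None \<Rightarrow> 0 | Some e \<Rightarrow> s e (run \<pi> \<phi> j))"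

definition round_avg :: "('e \<Rightarrow> 'o) \<Rightarrow> nat \<Rightarrow> real" where
  "round_avg \<phi> z = (\<Sum>j | j < card (UNIV :: 'e set) \<and> in_round \<phi> j z. gain \<phi> j) / q z"

lemma gain_nonneg: "0 < p \<phi> \<Longrightarrow> 0 \<le> gain \<phi> j"
  using run_pick score_nonneg valid_pr_run
  by (auto simp: gain_def split: option.split) (metis Diff_iff)

lemma round_avg_nonneg: "0 < p \<phi> \<Longrightarrow> 0 \<le> round_avg \<phi> z"
  unfolding round_avg_def using gain_nonneg by (simp add: sum_nonneg)

lemma card_in_round:
  assumes "0 < p \<phi>"
  shows "card {j. j < n \<and> in_round \<phi> j z} = card (dom (run \<pi> \<phi> n) \<inter> Ez z)"
proof (induction n)
  case (Suc n)
  show ?case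
  proof (cases "\<pi> (run \<pi> \<phi> n)")
    case None
    then have "{j. j < Suc n \<and> in_round \<phi> j z} = {j. j < n \<and> in_round \<phi> j z}"
      by (auto simp: in_round_def less_Suc_eq)
    then show ?thesis using Suc None by (simp add: dom_run_Suc)
  next
    case (Some e)
    have new: "e \<notin> dom (run \<pi> \<phi> n)" using run_pick[OF assms Some] by blast
    show ?thesis
    proof (cases "e \<in> Ez z")
      case True
      then have "{j. j < Suc n \<and> in_round \<phi> j z} = insert n {j. j < n \<and> in_round \<phi> j z}"
        using Some by (auto simp: in_round_def less_Suc_eq)
      then show ?thesis using Suc Some True new by (simp add: dom_run_Suc)
    next
      case False
      then have "{j. j < Suc n \<and> in_round \<phi> j z} = {j. j < n \<and> in_round \<phi> j z}"
        using Some by (auto simp: in_round_def less_Suc_eq)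
      then show ?thesis using Suc Some False by (simp add: dom_run_Suc)
    qed
  qed
qed simp

text \<open>Each selection of the greedy run belongs to exactly one meta-round.\<close>

lemma sum_quota_round_avg:
  assumes "0 < p \<phi>"
  shows "(\<Sum>z\<in>{1..b}. real (q z) * round_avg \<phi> z) = (\<Sum>j<card (UNIV :: 'e set). gain \<phi> j)"
proof -
  let ?N = "card (UNIV :: 'e set)"
  have "real (q z) * round_avg \<phi> z = (\<Sum>j<?N. if in_round \<phi> j z then gain \<phi> j else 0)"
    if "z \<in> {1..b}" for z
  proof -
    have "q z \<noteq> 0" using quota that by fastforce
    then show ?thesis by (simp add: round_avg_def sum.If_cases Int_def conj_commute)
  qed
  then have "(\<Sum>z\<in>{1..b}. real (q z) * round_avg \<phi> z)
      = (\<Sum>z\<in>{1..b}. \<Sum>j<?N. if in_round \<phi> j z then gain \<phi> j else 0)"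
    by (rule sum.cong[OF refl])
  also have "\<dots> = (\<Sum>j<?N. \<Sum>z\<in>{1..b}. if in_round \<phi> j z then gain \<phi> j else 0)"
    by (rule sum.swap)
  also have "\<dots> = (\<Sum>j<?N. gain \<phi> j)"
  proof (intro sum.cong refl)
    fix j
    show "(\<Sum>z\<in>{1..b}. if in_round \<phi> j z then gain \<phi> j else 0) = gain \<phi> j"
    proof (cases "\<pi> (run \<pi> \<phi> j)")
      case (Some e)
      then have "in_round \<phi> j z \<longleftrightarrow> z = block e" if "z \<in> {1..b}" for z
        using block block_eqI that by (auto simp: in_round_def)
      then show ?thesis using block(1)[of e] by (simp add: if_distrib cong: if_cong)
    qed (simp add: in_round_def gain_def)
  qed
  finally show ?thesis .
qed

text \<open>An item the greedy run left out scored at most the greedy choice in every step of its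
  meta-round; with diminishing scores this bound persists along any extension of the greedy history.\<close>

lemma score_beyond_greedy_le_round_avg:
  assumes "diminishing p s" and "0 < p \<phi>" and "valid_pr p \<psi>"
    and "run \<pi> \<phi> (card (UNIV :: 'e set)) \<subseteq>\<^sub>m \<psi>" and "x \<notin> dom \<psi>"
  shows "s x \<psi> \<le> round_avg \<phi> (block x)"
proof -
  let ?N = "card (UNIV :: 'e set)" and ?z = "block x"
  let ?R = "{j. j < ?N \<and> in_round \<phi> j ?z}"
  have le_gain: "s x \<psi> \<le> gain \<phi> j" if "j \<in> ?R" for j
  proof -
    from that obtain e where e: "\<pi> (run \<pi> \<phi> j) = Some e" "e \<in> Ez ?z" and "j < ?N"
      by (auto simp: in_round_def)
    then have le_\<psi>: "run \<pi> \<phi> j \<subseteq>\<^sub>m \<psi>"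
      using oracle_run_mono[of j ?N] assms(4) map_le_trans by fastforce
    obtain z where z: "z \<in> {1..b}" "e \<in> Ez z" "\<forall>e'\<in>Ez z - dom (run \<pi> \<phi> j). s e' (run \<pi> \<phi> j) \<le> s e (run \<pi> \<phi> j)"
      using run_pick[OF assms(2) e(1)] by blast
    have "z = ?z" using block_eqI[OF z(1,2)] block_eqI[OF block(1) e(2)] by simp
    moreover have "x \<notin> dom (run \<pi> \<phi> j)" using map_le_implies_dom_le[OF le_\<psi>] assms(5) by blast
    ultimately have "s x (run \<pi> \<phi> j) \<le> gain \<phi> j" using z block(2) e(1) by (simp add: gain_def)
    moreover have "s x \<psi> \<le> s x (run \<pi> \<phi> j)"
      using assms(1,3,5) le_\<psi> valid_pr_run[OF assms(2)] by (simp add: diminishing_def)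
    ultimately show ?thesis by linarith
  qed
  have "card ?R = q ?z"
    using card_in_round[OF assms(2)] run_filled[OF assms(2) block(1)] by simp
  moreover have "1 \<le> q ?z" using quota block(1) by blast
  moreover have "(\<Sum>j\<in>?R. s x \<psi>) \<le> (\<Sum>j\<in>?R. gain \<phi> j)" using le_gain by (rule sum_mono)
  ultimately show ?thesis by (simp add: round_avg_def field_simps)
qed

lemma sum_round_avg_le:
  assumes "0 < p \<phi>" and "pm_indep b Ez k S" and "\<forall>z\<in>{1..b}. real (k z) \<le> C * real (q z)"
  shows "(\<Sum>x\<in>S. round_avg \<phi> (block x)) \<le> C * (\<Sum>j<card (UNIV :: 'e set). gain \<phi> j)"
proof -
  have "(\<Sum>x\<in>S. round_avg \<phi> (block x)) \<le> (\<Sum>z\<in>{1..b}. real (k z) * round_avg \<phi> z)"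
    using assms(2) round_avg_nonneg[OF assms(1)] by (intro sum_by_block_le_quota) auto
  also have "\<dots> \<le> (\<Sum>z\<in>{1..b}. C * (real (q z) * round_avg \<phi> z))"
    using assms(3) round_avg_nonneg[OF assms(1)]
    by (intro sum_mono) (simp add: mult.assoc[symmetric] mult_right_mono)
  also have "\<dots> = C * (\<Sum>j<card (UNIV :: 'e set). gain \<phi> j)"
    by (simp only: sum_distrib_left[symmetric] sum_quota_round_avg[OF assms(1)])
  finally show ?thesis .
qed

end

section \<open>The hybrid policy\<close>

locale worst_case_greedy = adaptive_objective p f + meta_greedy_run p b Ez "fwc_marg p f" q \<pi>g
  for p :: "('e::finite \<Rightarrow> 'o::finite) \<Rightarrow> real" and f b Ez q \<pi>g +
  assumes wc_submodular: "wc_submodular p f"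
begin

lemma total_gain_le:
  assumes "0 < p \<phi>"
  shows "(\<Sum>j<card (UNIV :: 'e set). gain \<phi> j) \<le> f (sel \<pi>g \<phi>) \<phi>"
proof -
  let ?F = "\<lambda>j. f (dom (run \<pi>g \<phi> j)) \<phi>"
  have "gain \<phi> j \<le> ?F (Suc j) - ?F j" for j
    using fwc_marg_le_realized[OF assms consistent_run]
    by (simp add: gain_def dom_run_Suc split: option.split)
  then have "(\<Sum>j<card (UNIV :: 'e set). gain \<phi> j) \<le> (\<Sum>j<card (UNIV :: 'e set). ?F (Suc j) - ?F j)"
    by (rule sum_mono)
  also have "\<dots> = ?F (card (UNIV :: 'e set)) - ?F 0"
    by (rule sum_lessThan_telescope)
  finally show ?thesis using nonneg_f[rule_format, of "{}" \<phi>] by (simp add: sel_eq_dom_run)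
qed

lemma fwc_pol_le_greedy:
  assumes feasible: "feasible_policy p b Ez k \<pi>"
    and quota_ratio: "\<forall>z\<in>{1..b}. real (k z) \<le> C * real (q z)" and "0 \<le> C"
    and pos: "0 < p \<phi>"
  shows "fwc_pol p f (sel \<pi>) \<le> (1 + C) * f (sel \<pi>g \<phi>) \<phi>"
proof -
  let ?G = "run \<pi>g \<phi> (card (UNIV :: 'e set))"
  have "\<And>\<psi> x. valid_pr p \<psi> \<Longrightarrow> ?G \<subseteq>\<^sub>m \<psi> \<Longrightarrow> x \<notin> dom \<psi> \<Longrightarrow> fwc_marg p f x \<psi> \<le> round_avg \<phi> (block x)"
    using score_beyond_greedy_le_round_avg wc_submodular pos by (simp add: wc_submodular_iff_diminishing)
  then obtain \<phi>' where pos': "0 < p \<phi>'"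
    and adversary: "f (dom ?G \<union> sel \<pi> \<phi>') \<phi>' \<le> cond_f p f (dom ?G) ?G + (\<Sum>x\<in>sel \<pi> \<phi>' - dom ?G. round_avg \<phi> (block x))"
    using adversarial_realization[OF valid_pr_run[OF pos], where B = "\<lambda>x. round_avg \<phi> (block x)" and \<pi> = \<pi>]
    by blast
  have "fwc_pol p f (sel \<pi>) \<le> f (sel \<pi> \<phi>') \<phi>'" using pos' by (rule fwc_pol_le_value)
  also have "\<dots> \<le> f (dom ?G \<union> sel \<pi> \<phi>') \<phi>'" using pos' by (intro mono_realized) auto
  also have "\<dots> \<le> f (sel \<pi>g \<phi>) \<phi> + (\<Sum>x\<in>sel \<pi> \<phi>'. round_avg \<phi> (block x))"
    using adversary cond_f_realized[OF pos consistent_run] round_avg_nonneg[OF pos]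
      sum_mono2[of "sel \<pi> \<phi>'" "sel \<pi> \<phi>' - dom ?G" "\<lambda>x. round_avg \<phi> (block x)"]
    by (fastforce simp: sel_eq_dom_run)
  also have "\<dots> \<le> f (sel \<pi>g \<phi>) \<phi> + C * (\<Sum>j<card (UNIV :: 'e set). gain \<phi> j)"
    using sum_round_avg_le[OF pos _ quota_ratio] feasible pos' by (simp add: feasible_policy_def)
  also have "\<dots> \<le> (1 + C) * f (sel \<pi>g \<phi>) \<phi>"
    using total_gain_le[OF pos] \<open>0 \<le> C\<close> mult_left_mono by (fastforce simp: algebra_simps)
  finally show ?thesis .
qed

lemma fwc_pol_le_concat:
  assumes "feasible_policy p b Ez k \<pi>"
    and "\<forall>z\<in>{1..b}. real (k z) \<le> C * real (q z)" and "0 \<le> C"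
  shows "fwc_pol p f (sel \<pi>) \<le> (1 + C) * fwc_pol p f (sel_concat \<pi>g \<pi>')"
proof -
  have "fwc_pol p f (sel \<pi>) / (1 + C) \<le> fwc_pol p f (sel_concat \<pi>g \<pi>')"
  proof (rule le_fwc_pol)
    fix \<phi> :: "'e \<Rightarrow> 'o" assume pos: "0 < p \<phi>"
    have "fwc_pol p f (sel \<pi>) \<le> (1 + C) * f (sel \<pi>g \<phi>) \<phi>"
      using fwc_pol_le_greedy[OF assms pos] .
    also have "\<dots> \<le> (1 + C) * f (sel_concat \<pi>g \<pi>' \<phi>) \<phi>"
      using pos \<open>0 \<le> C\<close> by (intro mult_left_mono mono_realized) (auto simp: sel_concat_def)
    finally show "fwc_pol p f (sel \<pi>) / (1 + C) \<le> f (sel_concat \<pi>g \<pi>' \<phi>) \<phi>"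
      using \<open>0 \<le> C\<close> by (simp add: field_simps)
  qed
  then show ?thesis using \<open>0 \<le> C\<close> by (simp add: field_simps)
qed

end

locale expected_greedy = adaptive_objective p f + meta_greedy_run p b Ez "favg_marg p f" q \<pi>g
  for p :: "('e::finite \<Rightarrow> 'o::finite) \<Rightarrow> real" and f b Ez q \<pi>g +
  assumes adaptive_submodular: "adaptive_submodular p f"
begin

lemma expected_total_gain_le:
  "(\<Sum>\<Phi>\<in>UNIV. p \<Phi> * (\<Sum>j<card (UNIV :: 'e set). gain \<Phi> j)) \<le> favg_pol p f (sel \<pi>g)"
proof -
  let ?N = "card (UNIV :: 'e set)"
  have "gain \<Phi> j = pick_favg p f (run \<pi>g \<Phi> 0) \<pi>g (run \<pi>g \<Phi> j)" for \<Phi> j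
    by (simp add: gain_def pick_favg_def split: option.split)
  then have "favg_pol p f (sel \<pi>g)
      = (\<Sum>\<Phi>\<in>UNIV. p \<Phi> * f {} \<Phi>) + (\<Sum>\<Phi>\<in>UNIV. p \<Phi> * (\<Sum>j<?N. gain \<Phi> j))"
    using expected_value_after[of f \<pi>g 0 \<pi>g ?N]
    by (simp add: favg_pol_def sel_eq_dom_run sum_distrib_left sum.swap[of _ "{..<?N}"])
  moreover have "0 \<le> (\<Sum>\<Phi>\<in>UNIV. p \<Phi> * f {} \<Phi>)"
    using nonneg nonneg_f by (simp add: sum_nonneg)
  ultimately show ?thesis by linarith
qed

text \<open>The sum ranges over the item newly selected by \<open>\<pi>\<close> in step \<open>i\<close>, unless it lies in \<open>G\<close>.\<close>

lemma pick_favg_le_round_avg: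
  assumes pos: "0 < p \<Phi>"
  defines "G \<equiv> run \<pi>g \<Phi> (card (UNIV :: 'e set))"
  shows "pick_favg p f G \<pi> (run \<pi> \<Phi> i)
    \<le> (\<Sum>x\<in>(dom (run \<pi> \<Phi> (Suc i)) - dom G) - (dom (run \<pi> \<Phi> i) - dom G). round_avg \<Phi> (block x))"
proof (cases "\<pi> (run \<pi> \<Phi> i)")
  case (Some e)
  let ?\<psi> = "G ++ run \<pi> \<Phi> i"
  show ?thesis
  proof (cases "e \<in> dom ?\<psi>")
    case False
    have "valid_pr p ?\<psi>"
      using pos by (intro valid_pr_if_consistent[OF pos]) (simp add: G_def consistent_map_add consistent_run)
    moreover have "G \<subseteq>\<^sub>m ?\<psi>"
      unfolding G_def by (rule map_le_map_add_if_consistent[OF consistent_run consistent_run])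
    ultimately have "favg_marg p f e ?\<psi> \<le> round_avg \<Phi> (block e)"
      using score_beyond_greedy_le_round_avg adaptive_submodular pos False
      by (simp add: adaptive_submodular_iff_diminishing G_def)
    moreover have "(dom (run \<pi> \<Phi> (Suc i)) - dom G) - (dom (run \<pi> \<Phi> i) - dom G) = {e}"
      using Some False by (auto simp: dom_run_Suc)
    ultimately show ?thesis using Some by (simp add: pick_favg_def)
  qed (use Some round_avg_nonneg[OF pos] in \<open>simp add: pick_favg_def favg_marg_observed sum_nonneg\<close>)
qed (use round_avg_nonneg[OF pos] in \<open>simp add: pick_favg_def sum_nonneg\<close>)

lemma sum_pick_favg_le:
  assumes pos: "0 < p \<Phi>" and feasible: "feasible_policy p b Ez k \<pi>"
    and quota_ratio: "\<forall>z\<in>{1..b}. real (k z) \<le> C * real (q z)"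
  shows "(\<Sum>i<card (UNIV :: 'e set). pick_favg p f (run \<pi>g \<Phi> (card (UNIV :: 'e set))) \<pi> (run \<pi> \<Phi> i))
    \<le> C * (\<Sum>j<card (UNIV :: 'e set). gain \<Phi> j)"
proof -
  let ?N = "card (UNIV :: 'e set)"
  define D where "D i = dom (run \<pi> \<Phi> i) - dom (run \<pi>g \<Phi> ?N)" for i
  have "(\<Sum>i<?N. pick_favg p f (run \<pi>g \<Phi> ?N) \<pi> (run \<pi> \<Phi> i))
      \<le> (\<Sum>i<?N. \<Sum>x\<in>D (Suc i) - D i. round_avg \<Phi> (block x))"
    unfolding D_def using pick_favg_le_round_avg[OF pos] by (rule sum_mono)
  also have "\<dots> = (\<Sum>x\<in>D ?N. round_avg \<Phi> (block x))"
  proof (rule sum_diff_chain)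
    show "D i \<subseteq> D (Suc i)" for i
      using dom_oracle_run_mono[of i "Suc i" \<pi> "\<lambda>e _. \<Phi> e"] by (auto simp: D_def)
  qed (simp_all add: D_def)
  also have "\<dots> \<le> (\<Sum>x\<in>sel \<pi> \<Phi>. round_avg \<Phi> (block x))"
    using round_avg_nonneg[OF pos] by (intro sum_mono2) (auto simp: D_def sel_eq_dom_run)
  also have "\<dots> \<le> C * (\<Sum>j<?N. gain \<Phi> j)"
    using sum_round_avg_le[OF pos _ quota_ratio] feasible pos by (simp add: feasible_policy_def)
  finally show ?thesis .
qed

lemma favg_pol_le_greedy:
  assumes feasible: "feasible_policy p b Ez k \<pi>"
    and quota_ratio: "\<forall>z\<in>{1..b}. real (k z) \<le> C * real (q z)" and "0 \<le> C"
  shows "favg_pol p f (sel \<pi>) \<le> (1 + C) * favg_pol p f (sel \<pi>g)"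
proof -
  let ?N = "card (UNIV :: 'e set)"
  let ?picks = "\<lambda>\<Phi>. \<Sum>i<?N. pick_favg p f (run \<pi>g \<Phi> ?N) \<pi> (run \<pi> \<Phi> i)"
  have "favg_pol p f (sel \<pi>) \<le> (\<Sum>\<Phi>\<in>UNIV. p \<Phi> * f (dom (run \<pi>g \<Phi> ?N ++ run \<pi> \<Phi> ?N)) \<Phi>)"
    unfolding favg_pol_def using mono_realized by (intro expectation_mono) (auto simp: sel_eq_dom_run)
  also have "\<dots> = favg_pol p f (sel \<pi>g) + (\<Sum>\<Phi>\<in>UNIV. p \<Phi> * ?picks \<Phi>)"
    using expected_value_after[of f \<pi>g ?N \<pi> ?N]
    by (simp add: favg_pol_def sel_eq_dom_run sum_distrib_left sum.swap[of _ "{..<?N}"])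
  also have "\<dots> \<le> favg_pol p f (sel \<pi>g) + (\<Sum>\<Phi>\<in>UNIV. p \<Phi> * (C * (\<Sum>j<?N. gain \<Phi> j)))"
    using sum_pick_favg_le[OF _ feasible quota_ratio] by (intro add_left_mono expectation_mono)
  also have "\<dots> \<le> (1 + C) * favg_pol p f (sel \<pi>g)"
    using expected_total_gain_le \<open>0 \<le> C\<close> mult_left_mono
    by (fastforce simp: algebra_simps sum_distrib_left)
  finally show ?thesis .
qed

lemma favg_pol_le_concat:
  assumes "feasible_policy p b Ez k \<pi>"
    and "\<forall>z\<in>{1..b}. real (k z) \<le> C * real (q z)" and "0 \<le> C"
  shows "favg_pol p f (sel \<pi>) \<le> (1 + C) * favg_pol p f (sel_concat \<pi>' \<pi>g)"
proof -
  have "favg_pol p f (sel \<pi>) \<le> (1 + C) * favg_pol p f (sel \<pi>g)"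
    using favg_pol_le_greedy[OF assms] .
  also have "\<dots> \<le> (1 + C) * favg_pol p f (sel_concat \<pi>' \<pi>g)"
    using \<open>0 \<le> C\<close> by (intro mult_left_mono favg_pol_mono) (auto simp: sel_concat_def)
  finally show ?thesis .
qed

end

lemma min_half_ratio:
  fixes k :: "nat \<Rightarrow> nat"
  assumes "{1..b} \<noteq> {}" and "\<forall>z\<in>{1..b}. 2 \<le> k z"
  defines "\<gamma> \<equiv> Min ((\<lambda>z. real (k z div 2) / real (k z)) ` {1..b})"
  shows "0 < \<gamma>" and "\<forall>z\<in>{1..b}. real (k z) \<le> 1 / \<gamma> * real (k z div 2)"
proof -
  show pos: "0 < \<gamma>"
    unfolding \<gamma>_def using assms(1,2) by (subst Min_gr_iff) fastforce+
  show "\<forall>z\<in>{1..b}. real (k z) \<le> 1 / \<gamma> * real (k z div 2)"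
  proof
    fix z assume z: "z \<in> {1..b}"
    then have "\<gamma> \<le> real (k z div 2) / real (k z)" unfolding \<gamma>_def by (intro Min_le) auto
    moreover have "0 < real (k z)" using assms(2) z by fastforce
    ultimately show "real (k z) \<le> 1 / \<gamma> * real (k z div 2)"
      using pos by (simp add: field_simps)
  qed
qed

lemma ratio_le_if_le_inverse_plus_one:
  fixes \<gamma> x y :: real
  assumes "0 < \<gamma>" and "x \<le> (1 + 1 / \<gamma>) * y"
  shows "\<gamma> / (\<gamma> + 1) * x \<le> y"
proof -
  have "\<gamma> / (\<gamma> + 1) * x \<le> \<gamma> / (\<gamma> + 1) * ((1 + 1 / \<gamma>) * y)"
    using assms by (intro mult_left_mono) auto
  also have "\<dots> = (\<gamma> / (\<gamma> + 1) * (1 + 1 / \<gamma>)) * y" by (simp only: mult.assoc)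
  also have "1 + 1 / \<gamma> = (\<gamma> + 1) / \<gamma>" using assms(1) by (simp add: field_simps)
  also have "\<gamma> / (\<gamma> + 1) * ((\<gamma> + 1) / \<gamma>) = 1" using assms(1) by simp
  finally show ?thesis by simp
qed

theorem theorem5:
  fixes p :: "('e::finite \<Rightarrow> 'o::finite) \<Rightarrow> real"
    and f :: "'e set \<Rightarrow> ('e \<Rightarrow> 'o) \<Rightarrow> real"
    and b :: nat and Ez :: "nat \<Rightarrow> 'e set" and k :: "nat \<Rightarrow> nat"
    and \<pi>mw \<pi>ma :: "('e, 'o) policy"
  assumes prior: "is_prior p"
    and disj: "\<forall>z\<in>{1..b}. \<forall>z'\<in>{1..b}. z \<noteq> z' \<longrightarrow> Ez z \<inter> Ez z' = {}"
    and cover: "(\<Union>z\<in>{1..b}. Ez z) = UNIV"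
    and kbounds: "\<forall>z\<in>{1..b}. 2 \<le> k z \<and> k z \<le> card (Ez z)"
    and nonneg: "\<forall>S \<phi>. 0 \<le> f S \<phi>"
    and wcmono: "wc_monotone p f"
    and wcsub: "wc_submodular p f"
    and adsub: "adaptive_submodular p f"
    and mindep: "minimal_dependency p f"
    and mw: "is_pi_mw p f b Ez k \<pi>mw"
    and ma: "is_pi_ma p f b Ez k \<pi>ma"
  shows "let \<gamma> = Min ((\<lambda>z. real (k z div 2) / real (k z)) ` {1..b}) in
         \<forall>\<pi>. feasible_policy p b Ez k \<pi> \<longrightarrow>
           fwc_pol p f (sel_concat \<pi>mw \<pi>ma) \<ge> \<gamma> / (\<gamma> + 1) * fwc_pol p f (sel \<pi>) \<and>
           favg_pol p f (sel_concat \<pi>mw \<pi>ma) \<ge> \<gamma> / (\<gamma> + 1) * favg_pol p f (sel \<pi>)"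
proof -
  define \<gamma> where "\<gamma> = Min ((\<lambda>z. real (k z div 2) / real (k z)) ` {1..b})"
  have "{1..b} \<noteq> {}" using cover by (metis UNIV_not_empty UN_empty)
  moreover have "\<forall>z\<in>{1..b}. 2 \<le> k z" using kbounds by blast
  ultimately have \<gamma>: "0 < \<gamma>" and ratio_mw: "\<forall>z\<in>{1..b}. real (k z) \<le> 1 / \<gamma> * real (k z div 2)"
    unfolding \<gamma>_def by (rule min_half_ratio)+
  have "0 \<le> 1 / \<gamma>" using \<gamma> by simp
  then have ratio_ma: "\<forall>z\<in>{1..b}. real (k z) \<le> 1 / \<gamma> * real ((k z + 1) div 2)"
    using ratio_mw by (meson div_le_mono le_add1 mult_left_mono of_nat_mono order_trans)
  interpret adaptive_objective p f
    using prior nonneg wcmono mindep by unfold_locales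
  have mw': "worst_case_greedy p f b Ez (\<lambda>z. k z div 2) \<pi>mw"
  proof unfold_locales
    show "\<forall>z\<in>{1..b}. 1 \<le> k z div 2 \<and> k z div 2 \<le> card (Ez z)" using kbounds by fastforce
  qed (use disj cover mw wcsub wcmono in \<open>simp_all add: is_pi_mw_def wc_monotone_def\<close>)
  have ma': "expected_greedy p f b Ez (\<lambda>z. (k z + 1) div 2) \<pi>ma"
  proof unfold_locales
    show "\<forall>z\<in>{1..b}. 1 \<le> (k z + 1) div 2 \<and> (k z + 1) div 2 \<le> card (Ez z)" using kbounds by fastforce
  qed (use disj cover ma adsub favg_marg_nonneg in \<open>simp_all add: is_pi_ma_def\<close>)
  show ?thesis
    unfolding Let_def \<gamma>_def[symmetric]
    using worst_case_greedy.fwc_pol_le_concat[OF mw' _ ratio_mw \<open>0 \<le> 1 / \<gamma>\<close>]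
      expected_greedy.favg_pol_le_concat[OF ma' _ ratio_ma \<open>0 \<le> 1 / \<gamma>\<close>]
      ratio_le_if_le_inverse_plus_one[OF \<gamma>] by blast
qed

end
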